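(* Let $n\ge2$, $d\ge1$ with $\gcd(n,d)=1$, and let $\ell,\ell'\in\mathrm{Dyck}_{d,n}$. Then for every $2\le i\le n+d$ the relation $\bar\ell\,R\,r^i(\bar{\ell'})$ does not hold (in $L_{d+1,n}$).
   Context: $L_{a,b}$ is the set of lattice paths from $(0,0)$ to $(a,b)$ made of unit horizontal $(1,0)$ and vertical $(0,1)$ steps. $\mathrm{Dyck}_{d,n}$ is the set of $\ell\in L_{d,n}$ all of whose lattice points $(x,y)$ satisfy $y\le\frac nd x$. For $\ell\in L_{d,n}$, $\bar\ell\in L_{d+1,n}$ is obtained by adding a horizontal step at the beginning. For $p\in L_{d+1,n}$, $r(p)$ is obtained by moving the first step of $p$ to the end. For $p_1,p_2\in L_{d+1,n}$: $p_1\le p_2$ means $p_1$ lies weakly below $p_2$; $Y_p$ is the region of the $(d+1)\times n$ rectangle between $p$ and the right and bottom sides; $p_1\,R\,p_2$ iff $p_1\le p_2$ and no lattice-aligned rectangle of width $2$ and height $1$ fits inside $Y_{p_2}\setminus Y_{p_1}$. *)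

theory Defs
  imports Complex_Main
begin

text \<open>A lattice path is a list of steps: True = horizontal unit step (1,0),
  False = vertical unit step (0,1).\<close>

type_synonym path = "bool list"

definition lpath :: "nat \<Rightarrow> nat \<Rightarrow> path set" where
  "lpath a b = {p. length (filter id p) = a \<and> length (filter Not p) = b}"

definition lpoint :: "path \<Rightarrow> nat \<Rightarrow> nat \<times> nat" where
  "lpoint p i = (length (filter id (take i p)), length (filter Not (take i p)))"

definition lpoints :: "path \<Rightarrow> (nat \<times> nat) set" where
  "lpoints p = {lpoint p i | i. i \<le> length p}"

definition dyck :: "nat \<Rightarrow> nat \<Rightarrow> path set" where
  "dyck d n = {l \<in> lpath d n. \<forall>(x, y) \<in> lpoints l. real y \<le> real n / real d * real x}"

definition pbar :: "path \<Rightarrow> path" where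
  "pbar l = True # l"

definition rot :: "path \<Rightarrow> path" where
  "rot p = tl p @ [hd p]"

definition path_below :: "path \<Rightarrow> path \<Rightarrow> bool" where
  "path_below p1 p2 \<longleftrightarrow> (\<forall>(x, y) \<in> lpoints p1. \<exists>y'. (x, y') \<in> lpoints p2 \<and> y \<le> y')"

text \<open>Y_p as a set of unit cells: cell (k,j) is the square [k,k+1]\<times>[j,j+1];
  it lies below p (between p and the bottom/right sides) iff the horizontal step of p
  in column k occurs at height > j.\<close>
definition ycells :: "path \<Rightarrow> (nat \<times> nat) set" where
  "ycells p = {(k, j). \<exists>i < length p. p ! i \<and> fst (lpoint p i) = k \<and> j < snd (lpoint p i)}"

definition relR :: "path \<Rightarrow> path \<Rightarrow> bool" where
  "relR p1 p2 \<longleftrightarrow> path_below p1 p2 \<and>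
     \<not> (\<exists>k j. (k, j) \<in> ycells p2 - ycells p1 \<and> (Suc k, j) \<in> ycells p2 - ycells p1)"

end

theory Submission
  imports Defs
begin

text \<open>Write r^i(bar l') as u h w, where h is the prepended horizontal step, w consists of the
  first i - 1 steps of l' and u of the remaining ones. Because gcd(n, d) = 1, a Dyck path meets
  the line y = (n/d) x only at its end points, so w ends strictly below the line and hence u,
  ending at some point (x, y), ends strictly above it: n x < d y. The step h puts the cell
  (x, y - 1) into Y, and the first horizontal step of w (there is one, as w ends strictly below
  the line) puts (x + 1, y - 1) there too. Every cell (k, j) of Y of bar l satisfies
  d (j + 1) \<le> n (k - 1), which both of these cells violate, so they form a 2 \<times> 1 rectangle in
  the difference of the two regions.\<close>

lemma funpow_rot_eq_rotate: "p \<noteq> [] \<Longrightarrow> (rot ^^ i) p = rotate i p"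
  by (induction i) (simp_all add: rot_def rotate1_hd_tl)

lemma length_lpath: "p \<in> lpath a b \<Longrightarrow> length p = a + b"
  using sum_length_filter_compl[of id p] by (simp add: lpath_def comp_def)

lemma length_dyck: "l \<in> dyck d n \<Longrightarrow> length l = n + d"
  by (simp add: dyck_def length_lpath add.commute)

lemma dyck_lpoint_below:
  assumes "l \<in> dyck d n" "0 < d" "q \<le> length l"
  shows "d * snd (lpoint l q) \<le> n * fst (lpoint l q)"
proof -
  obtain a b where ab: "lpoint l q = (a, b)" by force
  then have "(a, b) \<in> lpoints l" using assms(3) unfolding lpoints_def by force
  then have "real b \<le> real n / real d * real a" using assms(1) unfolding dyck_def by blast
  then have "real d * real b \<le> real n * real a" using assms(2) by (simp add: field_simps)
  then show ?thesis using ab by (simp flip: of_nat_mult)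
qed

lemma dyck_lpoint_strictly_below:
  assumes "l \<in> dyck d n" "0 < d" "coprime n d" "0 < q" "q < length l"
  shows "d * snd (lpoint l q) < n * fst (lpoint l q)"
proof (rule ccontr)
  obtain a b where ab: "lpoint l q = (a, b)" by force
  have "a + b = q"
    using ab assms(5) sum_length_filter_compl[of id "take q l"] by (simp add: lpoint_def comp_def)
  have "d * b \<le> n * a" using dyck_lpoint_below[OF assms(1,2), of q] assms(5) ab by simp
  moreover assume "\<not> ?thesis"
  ultimately have eq: "d * b = n * a" using ab by simp
  then have "d dvd a"
    using assms(3) by (metis coprime_commute coprime_dvd_mult_right_iff dvd_triv_left)
  then obtain k where "a = d * k" by blast
  with eq assms(2) have "b = n * k" by simp
  with \<open>a + b = q\<close> \<open>a = d * k\<close> have "q = (n + d) * k" by (simp add: algebra_simps)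
  then show False using assms(4,5) length_dyck[OF assms(1)] by (cases k) auto
qed

lemma dyck_drop_strictly_above:
  assumes "l \<in> dyck d n" "0 < d" "coprime n d" "0 < q" "q < length l"
  shows "n * length (filter id (drop q l)) < d * length (filter Not (drop q l))"
proof -
  define a b x y where "a = length (filter id (take q l))" and "b = length (filter Not (take q l))"
    and "x = length (filter id (drop q l))" and "y = length (filter Not (drop q l))"
  have "d * b < n * a"
    using dyck_lpoint_strictly_below[OF assms] by (simp add: lpoint_def a_def b_def)
  moreover have "a + x = d" "b + y = n"
    using assms(1) append_take_drop_id[of q l] unfolding a_def b_def x_def y_def
    by (simp_all add: dyck_def lpath_def flip: length_append filter_append)
  then have "n * a + n * x = d * b + d * y"
    by (metis add_mult_distrib2 mult.commute)
  ultimately show ?thesis unfolding x_def y_def by linarith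
qed

lemma dyck_take_has_horizontal:
  assumes "l \<in> dyck d n" "0 < d" "coprime n d" "0 < q" "q < length l"
  shows "True \<in> set (take q l)"
proof -
  have "filter id (take q l) \<noteq> []"
    using dyck_lpoint_strictly_below[OF assms] by (auto simp: lpoint_def)
  then show ?thesis by (auto simp: filter_empty_conv)
qed

lemma ycells_dyck:
  assumes "l \<in> dyck d n" "0 < d" "(k, j) \<in> ycells l"
  shows "d * Suc j \<le> n * k"
proof -
  obtain i where i: "i < length l" "fst (lpoint l i) = k" "j < snd (lpoint l i)"
    using assms(3) unfolding ycells_def by blast
  then have "d * Suc j \<le> d * snd (lpoint l i)" by (metis Suc_leI mult_le_mono2)
  also have "\<dots> \<le> n * k" using dyck_lpoint_below[OF assms(1,2)] i by fastforce
  finally show ?thesis .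
qed

lemma ycells_Cons_True: "ycells (True # p) = apfst Suc ` ycells p"
proof (intro equalityI subsetI)
  fix c assume "c \<in> ycells (True # p)"
  then obtain i j where "c = (fst (lpoint (True # p) i), j)" "i < Suc (length p)"
    "(True # p) ! i" "j < snd (lpoint (True # p) i)"
    unfolding ycells_def by auto
  then show "c \<in> apfst Suc ` ycells p"
    by (cases i) (auto simp: ycells_def lpoint_def image_iff)
next
  fix c assume "c \<in> apfst Suc ` ycells p"
  then obtain i j where "c = (Suc (fst (lpoint p i)), j)" "i < length p" "p ! i"
    "j < snd (lpoint p i)"
    unfolding ycells_def by auto
  then show "c \<in> ycells (True # p)"
    unfolding ycells_def by (auto simp: lpoint_def intro!: exI[of _ "Suc i"])
qed

lemma ycells_pbar_dyck:
  assumes "l \<in> dyck d n" "0 < d" "(k, j) \<in> ycells (pbar l)"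
  shows "d * Suc j + n \<le> n * k"
  using assms ycells_dyck[OF assms(1,2)] by (auto simp: pbar_def ycells_Cons_True)

lemma ycells_append_Cons_True:
  assumes "j < length (filter Not u)"
  shows "(length (filter id u), j) \<in> ycells (u @ True # v)"
  unfolding ycells_def using assms by (auto simp: lpoint_def intro!: exI[of _ "length u"])

lemma ycells_domino:
  assumes "j < length (filter Not u)" "True \<in> set w"
  shows "(length (filter id u), j) \<in> ycells (u @ True # w)"
    and "(Suc (length (filter id u)), j) \<in> ycells (u @ True # w)"
proof -
  show "(length (filter id u), j) \<in> ycells (u @ True # w)"
    using ycells_append_Cons_True[OF assms(1)] .
  obtain ys zs where w: "w = ys @ True # zs" "True \<notin> set ys"
    using split_list_first[OF assms(2)] by blast
  then have "filter id ys = []" "filter Not ys = ys"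
    by (auto simp: filter_empty_conv filter_id_conv)
  then have "j < length (filter Not (u @ True # ys))"
    "length (filter id (u @ True # ys)) = Suc (length (filter id u))"
    using assms(1) by simp_all
  from ycells_append_Cons_True[OF this(1), of zs] this(2)
  show "(Suc (length (filter id u)), j) \<in> ycells (u @ True # w)"
    using w by simp
qed

theorem proposition4p18:
  fixes n d :: nat and l l' :: path
  assumes "n \<ge> 2" "d \<ge> 1" "coprime n d"
    and "l \<in> dyck d n" "l' \<in> dyck d n"
  shows "\<forall>i. 2 \<le> i \<and> i \<le> n + d \<longrightarrow> \<not> relR (pbar l) ((rot ^^ i) (pbar l'))"
proof (intro allI impI)
  fix i assume i: "2 \<le> i \<and> i \<le> n + d"
  define u w where "u = drop (i - 1) l'" and "w = take (i - 1) l'"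
  define x y where "x = length (filter id u)" and "y = length (filter Not u)"
  have d: "0 < d" using assms(2) by simp
  have q: "0 < i - 1" "i - 1 < length l'"
    using i length_dyck[OF assms(5)] by auto
  have "(rot ^^ i) (pbar l') = rotate i (True # l')"
    by (simp add: pbar_def funpow_rot_eq_rotate)
  also have "\<dots> = u @ True # w"
    using i q by (cases i) (simp_all add: rotate_drop_take u_def w_def)
  finally have rot: "(rot ^^ i) (pbar l') = u @ True # w" .
  have above: "n * x < d * y"
    using dyck_drop_strictly_above[OF assms(5) d assms(3) q] by (simp add: x_def y_def u_def)
  then have "y - 1 < y" by (cases y) auto
  then have "(x, y - 1) \<in> ycells (u @ True # w)" "(Suc x, y - 1) \<in> ycells (u @ True # w)"
    using ycells_domino dyck_take_has_horizontal[OF assms(5) d assms(3) q]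
    by (simp_all add: x_def y_def w_def)
  moreover have "(x, y - 1) \<notin> ycells (pbar l)" "(Suc x, y - 1) \<notin> ycells (pbar l)"
    using ycells_pbar_dyck[OF assms(4) d] above \<open>y - 1 < y\<close> by (fastforce simp: Suc_diff_1)+
  ultimately show "\<not> relR (pbar l) ((rot ^^ i) (pbar l'))"
    unfolding relR_def rot by blast
qed

end
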